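(* For a generic relaxed scenario $\mathscr{S}=(T,S,\sigma,\mu,\tau_T,\tau_S)$ it holds that $G_{=}(\mathscr{S})=\mathrm{sQO}(\mathscr{S})$ and thus $G_{=}(\mathscr{S})\subseteq\mathrm{wQO}(\mathscr{S})$. In particular, if $\mathscr{S}$ has no HGT-edges, or if $S$ and $T$ are binary, then $\mathrm{sQO}(\mathscr{S})$ is a cograph.
   Context: All trees are planted phylogenetic trees: a tree $T$ has a distinguished vertex $0_T$ of degree $1$ whose unique neighbor $\rho_T$ is the root, and every vertex other than $0_T$ and the leaves $L(T)$ has at least two children; it is binary if each such vertex has exactly two children. For $x,y\in V(T)$ write $y\preceq_T x$ if $x$ lies on the path from $0_T$ to $y$; edges are written $uv$ with $v\prec_T u$. The order extends to $V(T)\cup E(T)$: for a vertex $x$ and an edge $e=uv$, $x\preceq_T e$ iff $x\preceq_T v$, and $e\preceq_T x$ iff $u\preceq_T x$; for edges, $uv\preceq_T ab$ iff $v\preceq_T b$. Two elements are comparable if one is $\preceq$ the other. $V^0(T)=V(T)\setminus(L(T)\cup\{0_T\})$; $\mathrm{lca}_T$ denotes the last common ancestor. A time map for $T$ is $\tau_T\colon V(T)\to\mathbb{R}$ with $\tau_T(x)<\tau_T(y)$ whenever $x\prec_T y$. A relaxed scenario $\mathscr{S}=(T,S,\sigma,\mu,\tau_T,\tau_S)$ consists of a gene tree $T$ with time map $\tau_T$, a species tree $S$ with time map $\tau_S$, a map $\sigma\colon L(T)\to M$ with $M\subseteq L(S)$, and a map $\mu\colon V(T)\to V(S)\cup E(S)$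 such that (S0) $\mu(x)=0_S$ iff $x=0_T$; (S1) $\mu(x)\in L(S)$ iff $x\in L(T)$, in which case $\mu(x)=\sigma(x)$; (S2) if $\mu(x)\in V(S)$ then $\tau_S(\mu(x))=\tau_T(x)$; (S3) if $\mu(x)=uv\in E(S)$ then $\tau_S(v)<\tau_T(x)<\tau_S(u)$. The EDT graph $G_{=}(\mathscr{S})$ has vertex set $L(T)$ and an edge $xy$ ($x\ne y$) iff $\tau_T(\mathrm{lca}_T(x,y))=\tau_S(\mathrm{lca}_S(\sigma(x),\sigma(y)))$. An edge $uv\in E(T)$ is an HGT-edge if $\mu(u)$ and $\mu(v)$ are incomparable in $S$. The scenario is generic if for all $v\in V^0(T)$ and $U\in V^0(S)$, $\tau_T(v)=\tau_S(U)$ implies $\mu(v)=U$. $\mathrm{wQO}(\mathscr{S})$ (weak quasi-orthology graph) has vertex set $L(T)$ and edges $xy$, $x\neq y$, with $\mu(\mathrm{lca}_T(x,y))\in V^0(S)$; $\mathrm{sQO}(\mathscr{S})$ (strict quasi-orthology graph) has vertex set $L(T)$ and edges $xy$, $x\ne y$, with $\mu(\mathrm{lca}_T(x,y))=\mathrm{lca}_S(\sigma(x),\sigma(y))$. A cograph is a graph with no induced path on four vertices. *)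

theory Defs
  imports Complex_Main
begin

text \<open>A tree is given by a finite vertex set V, a set E of directed edges (u,v),
  where v is a child of u, and the planted vertex z (= 0_T).\<close>

definition children :: "('a \<times> 'a) set \<Rightarrow> 'a \<Rightarrow> 'a set" where
  "children E v = {w. (v, w) \<in> E}"

definition planted_tree :: "'a set \<Rightarrow> ('a \<times> 'a) set \<Rightarrow> 'a \<Rightarrow> bool" where
  "planted_tree V E z \<longleftrightarrow>
     finite V \<and> E \<subseteq> V \<times> V \<and> z \<in> V \<and>
     (\<forall>v\<in>V. (z, v) \<in> E\<^sup>*) \<and>
     (\<forall>v. (v, z) \<notin> E) \<and>
     (\<forall>v\<in>V - {z}. \<exists>!u. (u, v) \<in> E) \<and>
     card (children E z) = 1"

definition leaves :: "'a set \<Rightarrow> ('a \<times> 'a) set \<Rightarrow> 'a \<Rightarrow> 'a set" where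
  "leaves V E z = {v \<in> V. v \<noteq> z \<and> children E v = {}}"

definition inner :: "'a set \<Rightarrow> ('a \<times> 'a) set \<Rightarrow> 'a \<Rightarrow> 'a set" where
  "inner V E z = V - leaves V E z - {z}"

definition phylo_tree :: "'a set \<Rightarrow> ('a \<times> 'a) set \<Rightarrow> 'a \<Rightarrow> bool" where
  "phylo_tree V E z \<longleftrightarrow> planted_tree V E z \<and>
     (\<forall>v\<in>inner V E z. card (children E v) \<ge> 2)"

definition binary_tree :: "'a set \<Rightarrow> ('a \<times> 'a) set \<Rightarrow> 'a \<Rightarrow> bool" where
  "binary_tree V E z \<longleftrightarrow> phylo_tree V E z \<and>
     (\<forall>v\<in>inner V E z. card (children E v) = 2)"

definition preceq :: "('a \<times> 'a) set \<Rightarrow> 'a \<Rightarrow> 'a \<Rightarrow> bool" where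
  "preceq E y x \<longleftrightarrow> (x, y) \<in> E\<^sup>*"

definition lca :: "('a \<times> 'a) set \<Rightarrow> 'a \<Rightarrow> 'a \<Rightarrow> 'a" where
  "lca E x y = (THE c. preceq E x c \<and> preceq E y c \<and>
                  (\<forall>w. preceq E x w \<and> preceq E y w \<longrightarrow> preceq E c w))"

definition time_map :: "'a set \<Rightarrow> ('a \<times> 'a) set \<Rightarrow> ('a \<Rightarrow> real) \<Rightarrow> bool" where
  "time_map V E \<tau> \<longleftrightarrow> (\<forall>x\<in>V. \<forall>y\<in>V. preceq E x y \<and> x \<noteq> y \<longrightarrow> \<tau> x < \<tau> y)"

datatype 's vedge = Vx 's | Ed 's 's

definition elems :: "'s set \<Rightarrow> ('s \<times> 's) set \<Rightarrow> 's vedge set" where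
  "elems V E = Vx ` V \<union> (\<lambda>(u, v). Ed u v) ` E"

text \<open>The extension of the order to vertices and edges (edge uv has v child of u).\<close>

fun preceq_ve :: "('s \<times> 's) set \<Rightarrow> 's vedge \<Rightarrow> 's vedge \<Rightarrow> bool" where
  "preceq_ve E (Vx x) (Vx y) = preceq E x y"
| "preceq_ve E (Vx x) (Ed u v) = preceq E x v"
| "preceq_ve E (Ed u v) (Vx x) = preceq E u x"
| "preceq_ve E (Ed u v) (Ed a b) = preceq E v b"

definition comparable_ve :: "('s \<times> 's) set \<Rightarrow> 's vedge \<Rightarrow> 's vedge \<Rightarrow> bool" where
  "comparable_ve E a b \<longleftrightarrow> preceq_ve E a b \<or> preceq_ve E b a"

definition relaxed_scenario ::
  "'v set \<Rightarrow> ('v \<times> 'v) set \<Rightarrow> 'v \<Rightarrow> 's set \<Rightarrow> ('s \<times> 's) set \<Rightarrow> 's \<Rightarrow>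
   ('v \<Rightarrow> 's) \<Rightarrow> ('v \<Rightarrow> 's vedge) \<Rightarrow> ('v \<Rightarrow> real) \<Rightarrow> ('s \<Rightarrow> real) \<Rightarrow> bool" where
  "relaxed_scenario VT ET zT VS ES zS \<sigma> \<mu> \<tau>T \<tau>S \<longleftrightarrow>
     phylo_tree VT ET zT \<and> phylo_tree VS ES zS \<and>
     time_map VT ET \<tau>T \<and> time_map VS ES \<tau>S \<and>
     \<sigma> ` leaves VT ET zT \<subseteq> leaves VS ES zS \<and>
     (\<forall>x\<in>VT. \<mu> x \<in> elems VS ES) \<and>
     (\<forall>x\<in>VT. \<mu> x = Vx zS \<longleftrightarrow> x = zT) \<and>
     (\<forall>x\<in>VT. (\<exists>l\<in>leaves VS ES zS. \<mu> x = Vx l) \<longleftrightarrow> x \<in> leaves VT ET zT) \<and>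
     (\<forall>x\<in>leaves VT ET zT. \<mu> x = Vx (\<sigma> x)) \<and>
     (\<forall>x\<in>VT. \<forall>u. \<mu> x = Vx u \<longrightarrow> \<tau>S u = \<tau>T x) \<and>
     (\<forall>x\<in>VT. \<forall>u v. \<mu> x = Ed u v \<longrightarrow> \<tau>S v < \<tau>T x \<and> \<tau>T x < \<tau>S u)"

definition generic ::
  "'v set \<Rightarrow> ('v \<times> 'v) set \<Rightarrow> 'v \<Rightarrow> 's set \<Rightarrow> ('s \<times> 's) set \<Rightarrow> 's \<Rightarrow>
   ('v \<Rightarrow> 's vedge) \<Rightarrow> ('v \<Rightarrow> real) \<Rightarrow> ('s \<Rightarrow> real) \<Rightarrow> bool" where
  "generic VT ET zT VS ES zS \<mu> \<tau>T \<tau>S \<longleftrightarrow>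
     (\<forall>v\<in>inner VT ET zT. \<forall>U\<in>inner VS ES zS. \<tau>T v = \<tau>S U \<longrightarrow> \<mu> v = Vx U)"

definition HGT_edge :: "('v \<times> 'v) set \<Rightarrow> ('s \<times> 's) set \<Rightarrow> ('v \<Rightarrow> 's vedge) \<Rightarrow> 'v \<Rightarrow> 'v \<Rightarrow> bool" where
  "HGT_edge ET ES \<mu> u v \<longleftrightarrow> (u, v) \<in> ET \<and> \<not> comparable_ve ES (\<mu> u) (\<mu> v)"

text \<open>A graph is a pair (vertex set, symmetric set of ordered pairs of distinct vertices).\<close>

type_synonym 'v graph = "'v set \<times> ('v \<times> 'v) set"

definition EDT_graph ::
  "'v set \<Rightarrow> ('v \<times> 'v) set \<Rightarrow> 'v \<Rightarrow> ('s \<times> 's) set \<Rightarrow>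
   ('v \<Rightarrow> 's) \<Rightarrow> ('v \<Rightarrow> real) \<Rightarrow> ('s \<Rightarrow> real) \<Rightarrow> 'v graph" where
  "EDT_graph VT ET zT ES \<sigma> \<tau>T \<tau>S =
     (leaves VT ET zT,
      {(x, y). x \<in> leaves VT ET zT \<and> y \<in> leaves VT ET zT \<and> x \<noteq> y \<and>
               \<tau>T (lca ET x y) = \<tau>S (lca ES (\<sigma> x) (\<sigma> y))})"

definition wQO ::
  "'v set \<Rightarrow> ('v \<times> 'v) set \<Rightarrow> 'v \<Rightarrow> 's set \<Rightarrow> ('s \<times> 's) set \<Rightarrow> 's \<Rightarrow>
   ('v \<Rightarrow> 's vedge) \<Rightarrow> 'v graph" where
  "wQO VT ET zT VS ES zS \<mu> =
     (leaves VT ET zT,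
      {(x, y). x \<in> leaves VT ET zT \<and> y \<in> leaves VT ET zT \<and> x \<noteq> y \<and>
               \<mu> (lca ET x y) \<in> Vx ` inner VS ES zS})"

definition sQO ::
  "'v set \<Rightarrow> ('v \<times> 'v) set \<Rightarrow> 'v \<Rightarrow> ('s \<times> 's) set \<Rightarrow>
   ('v \<Rightarrow> 's) \<Rightarrow> ('v \<Rightarrow> 's vedge) \<Rightarrow> 'v graph" where
  "sQO VT ET zT ES \<sigma> \<mu> =
     (leaves VT ET zT,
      {(x, y). x \<in> leaves VT ET zT \<and> y \<in> leaves VT ET zT \<and> x \<noteq> y \<and>
               \<mu> (lca ET x y) = Vx (lca ES (\<sigma> x) (\<sigma> y))})"

definition subgraph :: "'v graph \<Rightarrow> 'v graph \<Rightarrow> bool" where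
  "subgraph G H \<longleftrightarrow> fst G \<subseteq> fst H \<and> snd G \<subseteq> snd H"

definition cograph :: "'v graph \<Rightarrow> bool" where
  "cograph G \<longleftrightarrow> \<not> (\<exists>a\<in>fst G. \<exists>b\<in>fst G. \<exists>c\<in>fst G. \<exists>d\<in>fst G.
       distinct [a, b, c, d] \<and>
       (a, b) \<in> snd G \<and> (b, c) \<in> snd G \<and> (c, d) \<in> snd G \<and>
       (a, c) \<notin> snd G \<and> (b, d) \<notin> snd G \<and> (a, d) \<notin> snd G)"

end

theory Submission
  imports Defs
begin

text \<open>
  For distinct leaves x, y of T the vertex lca_T(x, y) is inner. If sigma(x) = sigma(y), it is
  strictly older than tau_S(sigma(x)) = tau_T(x), so x y is neither an EDT edge nor an sQO edge;
  otherwise lca_S(sigma(x), sigma(y)) is inner, and genericity turns equality of the two times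
  into mu(lca_T(x, y)) = lca_S(sigma(x), sigma(y)).

  For the cograph property let v be the lowest common ancestor of the vertices of an induced
  path a-b-c-d and sort these leaves by the child of v above them. Leaves from different
  classes have lca v, so they are adjacent iff mu(v) is a vertex U of S and their species lie
  below different children of U. Without HGT edges mu is monotone along T, so every class lies
  below a single child of U. If both trees are binary there are only two classes and two
  children of U, and adjacent leaves of one class lie below the same child of U, because their
  lca is mapped to a vertex younger than U. Either adjacency pattern admits no induced path on
  four vertices.
\<close>

section \<open>Planted trees\<close>

definition is_lca :: "('a \<times> 'a) set \<Rightarrow> 'a set \<Rightarrow> 'a \<Rightarrow> bool" where
  "is_lca E A c \<longleftrightarrow> (\<forall>a\<in>A. (c, a) \<in> E\<^sup>*) \<and> (\<forall>w. (\<forall>a\<in>A. (w, a) \<in> E\<^sup>*) \<longrightarrow> (w, c) \<in> E\<^sup>*)"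

definition child_toward :: "('a \<times> 'a) set \<Rightarrow> 'a \<Rightarrow> 'a \<Rightarrow> 'a option" where
  "child_toward E u p =
     (if \<exists>c. (u, c) \<in> E \<and> (c, p) \<in> E\<^sup>* then Some (THE c. (u, c) \<in> E \<and> (c, p) \<in> E\<^sup>*) else None)"

lemma is_lca_ancestor: "is_lca E A c \<Longrightarrow> a \<in> A \<Longrightarrow> (c, a) \<in> E\<^sup>*"
  unfolding is_lca_def by blast

lemma is_lca_greatest: "is_lca E A c \<Longrightarrow> (\<And>a. a \<in> A \<Longrightarrow> (w, a) \<in> E\<^sup>*) \<Longrightarrow> (w, c) \<in> E\<^sup>*"
  unfolding is_lca_def by blast

lemma child_toward_eq_None_iff: "child_toward E u p = None \<longleftrightarrow> (u, p) \<notin> E\<^sup>+"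
  unfolding child_toward_def trancl_unfold_left by auto

lemma preceq_ve_refl: "preceq_ve E X X"
  by (cases X) (simp_all add: preceq_def)

locale planted =
  fixes V :: "'a set" and E :: "('a \<times> 'a) set" and z :: 'a
  assumes planted_tree: "planted_tree V E z"
begin

lemma finite_V: "finite V"
  and edges_in_V: "E \<subseteq> V \<times> V"
  and reachable_from_root: "v \<in> V \<Longrightarrow> (z, v) \<in> E\<^sup>*"
  and no_edge_into_root: "(v, z) \<notin> E"
  and card_children_root: "card (children E z) = 1"
  using planted_tree unfolding planted_tree_def by auto

lemma parent_unique: "(u, v) \<in> E \<Longrightarrow> (u', v) \<in> E \<Longrightarrow> u = u'"
  using planted_tree edges_in_V no_edge_into_root unfolding planted_tree_def by blast

lemma trancl_in_V: "(x, y) \<in> E\<^sup>+ \<Longrightarrow> x \<in> V \<and> y \<in> V"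
  using trancl_subset_Sigma[OF edges_in_V] by blast

lemma rtrancl_in_V: "(x, y) \<in> E\<^sup>* \<Longrightarrow> y \<in> V \<Longrightarrow> x \<in> V"
  by (metis rtranclD trancl_in_V)

lemma acyclic: "acyclic E"
proof -
  have "(v, v) \<notin> E\<^sup>+" if "(z, v) \<in> E\<^sup>*" for v
    using that
  proof (induction rule: rtrancl_induct)
    case base
    show ?case using no_edge_into_root by (blast dest: tranclD2)
  next
    case (step u v)
    show ?case
    proof
      \<comment> \<open>a cycle through v enters v from its unique parent u, which then lies on a cycle\<close>
      assume "(v, v) \<in> E\<^sup>+"
      then obtain w where "(v, w) \<in> E\<^sup>*" "(w, v) \<in> E" by (blast dest: tranclD2)
      with parent_unique step.hyps(2) have "(v, u) \<in> E\<^sup>*" by blast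
      with step.hyps(2) have "(u, u) \<in> E\<^sup>+" by (meson rtrancl_into_trancl2)
      with step.IH show False ..
    qed
  qed
  then show ?thesis
    unfolding acyclic_def using reachable_from_root trancl_in_V by blast
qed

lemma ancestor_antisym: "(x, y) \<in> E\<^sup>* \<Longrightarrow> (y, x) \<in> E\<^sup>* \<Longrightarrow> x = y"
  using acyclic_impl_antisym_rtrancl[OF acyclic] by (meson antisymD)

lemma no_trancl_cycle: "(x, y) \<in> E\<^sup>+ \<Longrightarrow> (y, x) \<notin> E\<^sup>*"
  using acyclic unfolding acyclic_def by (meson rtrancl_trancl_trancl)

lemma ancestors_comparable:
  "(a, y) \<in> E\<^sup>* \<Longrightarrow> (b, y) \<in> E\<^sup>* \<Longrightarrow> (a, b) \<in> E\<^sup>* \<or> (b, a) \<in> E\<^sup>*"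
proof (induction arbitrary: b rule: rtrancl_induct)
  case base
  then show ?case by simp
next
  case (step u y)
  from step.prems show ?case
  proof (cases rule: rtranclE)
    case base
    with step.hyps show ?thesis by (meson rtrancl.rtrancl_into_rtrancl)
  next
    case (step y')
    with parent_unique \<open>(u, y) \<in> E\<close> have "y' = u" by blast
    with step step.IH show ?thesis by blast
  qed
qed

lemma ancestor_of_parent: "(w, y) \<in> E\<^sup>* \<Longrightarrow> w \<noteq> y \<Longrightarrow> (u, y) \<in> E \<Longrightarrow> (w, u) \<in> E\<^sup>*"
  by (metis parent_unique rtranclE)

lemma leaf_in_V: "x \<in> leaves V E z \<Longrightarrow> x \<in> V"
  unfolding leaves_def by blast

lemma leaf_no_descendant: "x \<in> leaves V E z \<Longrightarrow> (x, w) \<in> E\<^sup>* \<Longrightarrow> w = x"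
  unfolding leaves_def children_def by (auto elim: converse_rtranclE)

lemma root_child_ancestor:
  obtains \<rho> where "(z, \<rho>) \<in> E" "\<And>v. v \<in> V \<Longrightarrow> v \<noteq> z \<Longrightarrow> (\<rho>, v) \<in> E\<^sup>*"
proof -
  obtain \<rho> where \<rho>: "children E z = {\<rho>}" using card_children_root card_1_singletonE by blast
  have "(\<rho>, v) \<in> E\<^sup>*" if "v \<in> V" "v \<noteq> z" for v
    using reachable_from_root[OF that(1)] that(2) \<rho>
    by (auto elim: converse_rtranclE simp: children_def)
  with \<rho> show thesis using that unfolding children_def by blast
qed

lemma time_map_less:
  assumes "time_map V E \<tau>" "(x, y) \<in> E\<^sup>+"
  shows "\<tau> y < \<tau> x"
proof -
  have "x \<noteq> y" using assms(2) no_trancl_cycle by auto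
  moreover have "x \<in> V" "y \<in> V" using assms(2) trancl_in_V by auto
  moreover have "(x, y) \<in> E\<^sup>*" using assms(2) by (rule trancl_into_rtrancl)
  ultimately show ?thesis using assms(1) unfolding time_map_def preceq_def by blast
qed

lemma time_map_le:
  assumes "time_map V E \<tau>" "(x, y) \<in> E\<^sup>*"
  shows "\<tau> y \<le> \<tau> x"
  using assms(2) time_map_less[OF assms(1)] by (cases "x = y") (auto dest: rtranclD intro: less_imp_le)

lemma preceq_ve_trans:
  assumes "X \<in> elems V E" "Y \<in> elems V E" "preceq_ve E X Y" "preceq_ve E Y Z"
  shows "preceq_ve E X Z"
proof -
  have descend_edge: "(r, u) \<in> E\<^sup>*"
    if "(u, v) \<in> E" "(a, b) \<in> E" "(b, v) \<in> E\<^sup>*" "(r, a) \<in> E\<^sup>*" for r u v a b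
  proof -
    have "(a, v) \<in> E\<^sup>+" using that(2,3) by (rule rtrancl_into_trancl2)
    then have "r \<noteq> v" using that(4) no_trancl_cycle by blast
    moreover have "(r, v) \<in> E\<^sup>*" using that(4) \<open>(a, v) \<in> E\<^sup>+\<close> by (meson rtrancl_trans trancl_into_rtrancl)
    ultimately show ?thesis using ancestor_of_parent that(1) by blast
  qed
  show ?thesis
    using assms unfolding elems_def
    by (cases X; cases Y; cases Z)
      (auto simp: preceq_def intro: descend_edge rtrancl_trans rtrancl_into_rtrancl)
qed

lemma is_lca_unique: "is_lca E A c \<Longrightarrow> is_lca E A c' \<Longrightarrow> c = c'"
  unfolding is_lca_def using ancestor_antisym by blast

lemma is_lca_exists:
  assumes "A \<subseteq> V" "A \<noteq> {}"
  obtains c where "is_lca E A c"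
proof -
  define C where "C = {w. \<forall>a\<in>A. (w, a) \<in> E\<^sup>*}"
  obtain x where x: "x \<in> A" using assms(2) by blast
  have "finite E" using finite_V edges_in_V finite_subset by blast
  then have "wf (E\<inverse>)" using finite_acyclic_wf_converse acyclic by blast
  moreover have "z \<in> C" unfolding C_def using assms(1) reachable_from_root by blast
  \<comment> \<open>a common ancestor none of whose children is one; the common ancestors form a chain\<close>
  ultimately obtain c where c: "c \<in> C" and lowest: "\<And>c'. (c, c') \<in> E \<Longrightarrow> c' \<notin> C"
    by (rule wfE_min) auto
  have "(w, c) \<in> E\<^sup>*" if w: "w \<in> C" for w
  proof -
    from w c x have "(w, c) \<in> E\<^sup>* \<or> (c, w) \<in> E\<^sup>*"
      unfolding C_def using ancestors_comparable by blast
    moreover have "(c, w) \<notin> E\<^sup>+"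
    proof
      assume "(c, w) \<in> E\<^sup>+"
      then obtain c' where c': "(c, c') \<in> E" "(c', w) \<in> E\<^sup>*" unfolding trancl_unfold_left by blast
      with w have "c' \<in> C" unfolding C_def by (blast intro: rtrancl_trans)
      with lowest c' show False by blast
    qed
    ultimately show ?thesis by (metis rtranclD rtrancl.rtrancl_refl)
  qed
  with c show thesis using that unfolding is_lca_def C_def by blast
qed

lemma lca_eqI: "is_lca E {x, y} c \<Longrightarrow> lca E x y = c"
  unfolding lca_def preceq_def
  by (rule the_equality) (auto simp: is_lca_def intro: ancestor_antisym)

lemma is_lca_lca: "x \<in> V \<Longrightarrow> y \<in> V \<Longrightarrow> is_lca E {x, y} (lca E x y)"
  by (metis is_lca_exists lca_eqI empty_not_insert insert_subset empty_subsetI)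

lemma lca_eq_iff: "x \<in> V \<Longrightarrow> y \<in> V \<Longrightarrow> lca E x y = c \<longleftrightarrow> is_lca E {x, y} c"
  using is_lca_lca is_lca_unique lca_eqI by blast

lemma lca_self: "lca E x x = x"
  by (rule lca_eqI) (simp add: is_lca_def)

lemma is_lca_inner:
  assumes "A \<subseteq> leaves V E z" "x \<in> A" "y \<in> A" "x \<noteq> y" "is_lca E A c"
  shows "c \<in> inner V E z"
proof -
  have anc: "(c, x) \<in> E\<^sup>*" "(c, y) \<in> E\<^sup>*" using assms(2,3,5) unfolding is_lca_def by auto
  have "x \<in> V" using assms(1,2) unfolding leaves_def by auto
  with anc have "c \<in> V" using rtrancl_in_V by blast
  moreover have "c \<notin> leaves V E z" using anc leaf_no_descendant assms(4) by metis
  moreover have "c \<noteq> z"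
  proof
    assume "c = z"
    obtain \<rho> where "(z, \<rho>) \<in> E" and below: "\<And>v. v \<in> V \<Longrightarrow> v \<noteq> z \<Longrightarrow> (\<rho>, v) \<in> E\<^sup>*"
      using root_child_ancestor by blast
    have "\<forall>a\<in>A. (\<rho>, a) \<in> E\<^sup>*" using assms(1) below unfolding leaves_def by blast
    with assms(5) \<open>c = z\<close> have "(\<rho>, z) \<in> E\<^sup>*" unfolding is_lca_def by blast
    with \<open>(z, \<rho>) \<in> E\<close> no_trancl_cycle show False by blast
  qed
  ultimately show ?thesis unfolding inner_def by blast
qed

lemma is_lca_leaves_trancl:
  assumes "A \<subseteq> leaves V E z" "x \<in> A" "y \<in> A" "x \<noteq> y" "is_lca E A c" "a \<in> A"
  shows "(c, a) \<in> E\<^sup>+"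
proof -
  have "c \<notin> leaves V E z" using is_lca_inner[OF assms(1-5)] unfolding inner_def by blast
  with assms(1,6) have "c \<noteq> a" by blast
  with is_lca_ancestor[OF assms(5,6)] show ?thesis by (auto dest: rtranclD)
qed

lemma lca_leaves_inner:
  assumes "x \<in> leaves V E z" "y \<in> leaves V E z" "x \<noteq> y"
  shows "lca E x y \<in> inner V E z"
proof -
  have "x \<in> V" "y \<in> V" using assms(1,2) unfolding leaves_def by auto
  with assms show ?thesis using is_lca_inner[of "{x, y}" x y] is_lca_lca by simp
qed

lemma child_on_path_unique:
  assumes "(v, c) \<in> E" "(v, c') \<in> E" "(c, x) \<in> E\<^sup>*" "(c', x) \<in> E\<^sup>*"
  shows "c = c'"
proof (rule ccontr)
  assume "c \<noteq> c'"
  from ancestors_comparable[OF assms(3,4)] have "(c, v) \<in> E\<^sup>* \<or> (c', v) \<in> E\<^sup>*"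
    using ancestor_of_parent assms(1,2) \<open>c \<noteq> c'\<close> by metis
  with assms(1,2) no_trancl_cycle show False by blast
qed

lemma child_toward_eq_Some: "(u, c) \<in> E \<Longrightarrow> (c, p) \<in> E\<^sup>* \<Longrightarrow> child_toward E u p = Some c"
  unfolding child_toward_def by (auto intro: child_on_path_unique)

lemma child_toward_SomeD: "child_toward E u p = Some c \<Longrightarrow> (u, c) \<in> E \<and> (c, p) \<in> E\<^sup>*"
  by (metis child_toward_def child_toward_eq_Some option.distinct(1) option.inject)

lemma child_toward_in_children: "child_toward E u p = Some c \<Longrightarrow> c \<in> children E u"
  using child_toward_SomeD unfolding children_def by blast

lemma child_toward_descendant:
  assumes "(u, s) \<in> E\<^sup>+" "(s, p) \<in> E\<^sup>*"
  shows "child_toward E u p = child_toward E u s"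
proof -
  obtain c where c: "(u, c) \<in> E" "(c, s) \<in> E\<^sup>*" using assms(1) unfolding trancl_unfold_left by blast
  with assms(2) have "child_toward E u p = Some c" by (blast intro: child_toward_eq_Some rtrancl_trans)
  with c show ?thesis using child_toward_eq_Some by simp
qed

lemma is_lca_iff_child_toward:
  assumes "p \<noteq> u" "q \<noteq> u"
  shows "is_lca E {p, q} u \<longleftrightarrow> child_toward E u p \<noteq> None \<and> child_toward E u q \<noteq> None \<and>
           child_toward E u p \<noteq> child_toward E u q"
proof
  assume lca: "is_lca E {p, q} u"
  then have "(u, p) \<in> E\<^sup>*" "(u, q) \<in> E\<^sup>*" unfolding is_lca_def by auto
  with assms have "(u, p) \<in> E\<^sup>+" "(u, q) \<in> E\<^sup>+" by (auto dest: rtranclD)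
  then obtain c1 c2 where c1: "child_toward E u p = Some c1" and c2: "child_toward E u q = Some c2"
    by (cases "child_toward E u p"; cases "child_toward E u q") (auto simp: child_toward_eq_None_iff)
  have "c1 \<noteq> c2"
  proof
    assume "c1 = c2"
    with c1 c2 lca have "(c1, u) \<in> E\<^sup>*" unfolding is_lca_def by (blast dest: child_toward_SomeD)
    with c1 no_trancl_cycle show False by (blast dest: child_toward_SomeD)
  qed
  with c1 c2 show "child_toward E u p \<noteq> None \<and> child_toward E u q \<noteq> None \<and>
      child_toward E u p \<noteq> child_toward E u q" by simp
next
  assume split: "child_toward E u p \<noteq> None \<and> child_toward E u q \<noteq> None \<and>
      child_toward E u p \<noteq> child_toward E u q"
  then have up: "(u, p) \<in> E\<^sup>+" and uq: "(u, q) \<in> E\<^sup>+" by (simp_all add: child_toward_eq_None_iff)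
  have "(w, u) \<in> E\<^sup>*" if wp: "(w, p) \<in> E\<^sup>*" and wq: "(w, q) \<in> E\<^sup>*" for w
  proof -
    have "(u, w) \<notin> E\<^sup>+"
    proof
      assume "(u, w) \<in> E\<^sup>+"
      with split show False
        using child_toward_descendant[OF _ wp] child_toward_descendant[OF _ wq] by simp
    qed
    moreover have "(u, w) \<in> E\<^sup>* \<or> (w, u) \<in> E\<^sup>*"
      using ancestors_comparable[OF trancl_into_rtrancl[OF up] wp] by blast
    ultimately show ?thesis by (metis rtranclD rtrancl.rtrancl_refl)
  qed
  with up uq show "is_lca E {p, q} u" unfolding is_lca_def by auto
qed

lemma child_toward_eq_if_lca_not_above:
  assumes lca: "is_lca E {p, q} w" and not_above: "(w, u) \<notin> E\<^sup>*"
  shows "child_toward E u p = child_toward E u q"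
proof (cases "(u, w) \<in> E\<^sup>+")
  case True
  have wp: "(w, p) \<in> E\<^sup>*" and wq: "(w, q) \<in> E\<^sup>*" using is_lca_ancestor[OF lca] by simp_all
  show ?thesis using child_toward_descendant[OF True wp] child_toward_descendant[OF True wq] by simp
next
  case False
  have "child_toward E u r = None" if wr: "(w, r) \<in> E\<^sup>*" for r
  proof -
    have "(u, r) \<notin> E\<^sup>+"
    proof
      assume "(u, r) \<in> E\<^sup>+"
      then have "(u, w) \<in> E\<^sup>* \<or> (w, u) \<in> E\<^sup>*"
        using ancestors_comparable[OF trancl_into_rtrancl wr] by blast
      with False not_above show False by (auto dest: rtranclD)
    qed
    then show ?thesis by (simp add: child_toward_eq_None_iff)
  qed
  with is_lca_ancestor[OF lca] show ?thesis by simp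
qed

lemma is_lca_leaves_child_toward:
  assumes leaves: "A \<subseteq> leaves V E z" and two: "x \<in> A" "y \<in> A" "x \<noteq> y" and lca: "is_lca E A v"
  shows child_toward_defined: "a \<in> A \<Longrightarrow> child_toward E v a \<noteq> None"
    and lca_eq_iff_child_toward_ne:
      "a \<in> A \<Longrightarrow> b \<in> A \<Longrightarrow> lca E a b = v \<longleftrightarrow> child_toward E v a \<noteq> child_toward E v b"
    and lca_below_if_child_toward_eq:
      "a \<in> A \<Longrightarrow> b \<in> A \<Longrightarrow> child_toward E v a = child_toward E v b \<Longrightarrow> (v, lca E a b) \<in> E\<^sup>+"
    and child_toward_not_constant: "\<not> (\<forall>a\<in>A. child_toward E v a = child_toward E v x)"
proof -
  have below: "(v, a) \<in> E\<^sup>+" if "a \<in> A" for a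
    using is_lca_leaves_trancl[OF leaves two lca that] .
  have in_V: "a \<in> V" if "a \<in> A" for a
    using leaves that unfolding leaves_def by blast
  show defined: "child_toward E v a \<noteq> None" if "a \<in> A" for a
    using below[OF that] by (simp add: child_toward_eq_None_iff)
  show "lca E a b = v \<longleftrightarrow> child_toward E v a \<noteq> child_toward E v b" if "a \<in> A" "b \<in> A" for a b
  proof -
    have "a \<noteq> v" "b \<noteq> v" using below that no_trancl_cycle by blast+
    then show ?thesis
      using lca_eq_iff in_V that is_lca_iff_child_toward defined by simp
  qed
  show "(v, lca E a b) \<in> E\<^sup>+" if ab: "a \<in> A" "b \<in> A" and eq: "child_toward E v a = child_toward E v b"
    for a b
  proof -
    obtain c where c: "child_toward E v a = Some c" using defined[OF ab(1)] by blast
    moreover from c eq have "child_toward E v b = Some c" by simp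
    ultimately have "(c, a) \<in> E\<^sup>*" "(c, b) \<in> E\<^sup>*" using child_toward_SomeD by blast+
    then have "(c, lca E a b) \<in> E\<^sup>*"
      using is_lca_greatest[OF is_lca_lca[OF in_V[OF ab(1)] in_V[OF ab(2)]]] by blast
    with c show ?thesis by (blast dest: child_toward_SomeD intro: rtrancl_into_trancl2)
  qed
  show "\<not> (\<forall>a\<in>A. child_toward E v a = child_toward E v x)"
  proof
    assume const: "\<forall>a\<in>A. child_toward E v a = child_toward E v x"
    obtain c where c: "child_toward E v x = Some c" using defined[OF two(1)] by blast
    with const have "(c, a) \<in> E\<^sup>*" if "a \<in> A" for a
      using that by (auto dest: child_toward_SomeD)
    then have "(c, v) \<in> E\<^sup>*" by (rule is_lca_greatest[OF lca])
    with c show False using no_trancl_cycle by (blast dest: child_toward_SomeD)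
  qed
qed

end

section \<open>Induced paths on four vertices\<close>

definition induced_P4 :: "('v \<times> 'v) set \<Rightarrow> 'v \<Rightarrow> 'v \<Rightarrow> 'v \<Rightarrow> 'v \<Rightarrow> bool" where
  "induced_P4 G a b c d \<longleftrightarrow>
     (a, b) \<in> G \<and> (b, c) \<in> G \<and> (c, d) \<in> G \<and> (a, c) \<notin> G \<and> (b, d) \<notin> G \<and> (a, d) \<notin> G"

lemma cographI:
  assumes "\<And>a b c d. {a, b, c, d} \<subseteq> fst G \<Longrightarrow> distinct [a, b, c, d] \<Longrightarrow> \<not> induced_P4 (snd G) a b c d"
  shows "cograph G"
  using assms unfolding cograph_def induced_P4_def by blast

text \<open>
  In both lemmas below the graph decomposes into disjoint unions and joins of pieces that each
  lie inside one beta-class. An induced P4 is connected and has a connected complement, so it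
  would lie inside a single class.
\<close>

lemma not_induced_P4_if_classes_constant:
  fixes \<beta> :: "'v \<Rightarrow> 'b" and \<kappa> :: "'v \<Rightarrow> 'c option"
  assumes not_one_class: "\<not> (\<beta> a = \<beta> b \<and> \<beta> a = \<beta> c \<and> \<beta> a = \<beta> d)"
    and cross: "\<And>x y. x \<in> {a, b, c, d} \<Longrightarrow> y \<in> {a, b, c, d} \<Longrightarrow> \<beta> x \<noteq> \<beta> y \<Longrightarrow>
      (x, y) \<in> G \<longleftrightarrow> \<kappa> x \<noteq> None \<and> \<kappa> y \<noteq> None \<and> \<kappa> x \<noteq> \<kappa> y"
    and within: "\<And>x y. x \<in> {a, b, c, d} \<Longrightarrow> y \<in> {a, b, c, d} \<Longrightarrow> \<beta> x = \<beta> y \<Longrightarrow> \<kappa> x = \<kappa> y"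
  shows "\<not> induced_P4 G a b c d"
proof -
  have v: "a \<in> {a, b, c, d}" "b \<in> {a, b, c, d}" "c \<in> {a, b, c, d}" "d \<in> {a, b, c, d}" by simp_all
  show ?thesis
    using not_one_class cross[OF v(1,2)] cross[OF v(2,3)] cross[OF v(3,4)] cross[OF v(1,3)]
      cross[OF v(2,4)] cross[OF v(1,4)] within[OF v(1,2)] within[OF v(2,3)] within[OF v(3,4)]
      within[OF v(1,3)] within[OF v(2,4)] within[OF v(1,4)]
    unfolding induced_P4_def by smt
qed

lemma not_induced_P4_if_two_classes:
  fixes \<beta> :: "'v \<Rightarrow> 'b" and \<kappa> :: "'v \<Rightarrow> 'c option"
  assumes not_one_class: "\<not> (\<beta> a = \<beta> b \<and> \<beta> a = \<beta> c \<and> \<beta> a = \<beta> d)"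
    and cross: "\<And>x y. x \<in> {a, b, c, d} \<Longrightarrow> y \<in> {a, b, c, d} \<Longrightarrow> \<beta> x \<noteq> \<beta> y \<Longrightarrow>
      (x, y) \<in> G \<longleftrightarrow> \<kappa> x \<noteq> None \<and> \<kappa> y \<noteq> None \<and> \<kappa> x \<noteq> \<kappa> y"
    and within: "\<And>x y. x \<in> {a, b, c, d} \<Longrightarrow> y \<in> {a, b, c, d} \<Longrightarrow> \<beta> x = \<beta> y \<Longrightarrow> (x, y) \<in> G \<Longrightarrow> \<kappa> x = \<kappa> y"
    and two: "\<And>x. x \<in> {a, b, c, d} \<Longrightarrow> \<beta> x = p \<or> \<beta> x = q"
    and three: "\<And>x. x \<in> {a, b, c, d} \<Longrightarrow> \<kappa> x = None \<or> \<kappa> x = Some l \<or> \<kappa> x = Some r"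
  shows "\<not> induced_P4 G a b c d"
proof -
  have v: "a \<in> {a, b, c, d}" "b \<in> {a, b, c, d}" "c \<in> {a, b, c, d}" "d \<in> {a, b, c, d}" by simp_all
  show ?thesis
    using not_one_class cross[OF v(1,2)] cross[OF v(2,3)] cross[OF v(3,4)] cross[OF v(1,3)]
      cross[OF v(2,4)] cross[OF v(1,4)] within[OF v(1,2)] within[OF v(2,3)] within[OF v(3,4)]
      two[OF v(1)] two[OF v(2)] two[OF v(3)] two[OF v(4)]
      three[OF v(1)] three[OF v(2)] three[OF v(3)] three[OF v(4)]
    unfolding induced_P4_def by smt
qed

section \<open>Relaxed scenarios\<close>

locale scenario =
  fixes VT :: "'v set" and ET :: "('v \<times> 'v) set" and zT :: 'v
    and VS :: "'s set" and ES :: "('s \<times> 's) set" and zS :: 's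
    and \<sigma> :: "'v \<Rightarrow> 's" and \<mu> :: "'v \<Rightarrow> 's vedge"
    and \<tau>T :: "'v \<Rightarrow> real" and \<tau>S :: "'s \<Rightarrow> real"
  assumes relaxed_scenario: "relaxed_scenario VT ET zT VS ES zS \<sigma> \<mu> \<tau>T \<tau>S"
begin

lemma phylo_T: "phylo_tree VT ET zT"
  and phylo_S: "phylo_tree VS ES zS"
  and time_map_T: "time_map VT ET \<tau>T"
  and time_map_S: "time_map VS ES \<tau>S"
  and \<sigma>_leaf: "x \<in> leaves VT ET zT \<Longrightarrow> \<sigma> x \<in> leaves VS ES zS"
  and \<mu>_elems: "x \<in> VT \<Longrightarrow> \<mu> x \<in> elems VS ES"
  and \<mu>_root: "x \<in> VT \<Longrightarrow> \<mu> x = Vx zS \<longleftrightarrow> x = zT"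
  and \<mu>_leaf: "x \<in> VT \<Longrightarrow> (\<exists>l\<in>leaves VS ES zS. \<mu> x = Vx l) \<longleftrightarrow> x \<in> leaves VT ET zT"
  and \<mu>_\<sigma>: "x \<in> leaves VT ET zT \<Longrightarrow> \<mu> x = Vx (\<sigma> x)"
  and time_at_vertex: "x \<in> VT \<Longrightarrow> \<mu> x = Vx u \<Longrightarrow> \<tau>S u = \<tau>T x"
  and time_on_edge: "x \<in> VT \<Longrightarrow> \<mu> x = Ed u w \<Longrightarrow> \<tau>S w < \<tau>T x \<and> \<tau>T x < \<tau>S u"
  using relaxed_scenario unfolding relaxed_scenario_def by blast+

sublocale T: planted VT ET zT
  using phylo_T by unfold_locales (simp add: phylo_tree_def)

sublocale S: planted VS ES zS
  using phylo_S by unfold_locales (simp add: phylo_tree_def)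

lemma \<mu>_inner:
  assumes "v \<in> inner VT ET zT" "\<mu> v = Vx U"
  shows "U \<in> inner VS ES zS"
proof -
  have "v \<in> VT" "v \<notin> leaves VT ET zT" "v \<noteq> zT" using assms(1) unfolding inner_def by auto
  moreover from this(1) have "Vx U \<in> elems VS ES" using \<mu>_elems assms(2) by metis
  ultimately show ?thesis
    using assms(2) \<mu>_leaf \<mu>_root unfolding inner_def elems_def by auto
qed

lemma EDT_edge_species_distinct:
  assumes "x \<in> leaves VT ET zT" "y \<in> leaves VT ET zT" "x \<noteq> y"
    and "\<tau>T (lca ET x y) = \<tau>S (lca ES (\<sigma> x) (\<sigma> y))"
  shows "\<sigma> x \<noteq> \<sigma> y"
proof
  assume "\<sigma> x = \<sigma> y"
  have "x \<in> VT" "y \<in> VT" using assms(1,2) T.leaf_in_V by blast+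
  have "\<tau>S (\<sigma> x) = \<tau>T x" using time_at_vertex[OF \<open>x \<in> VT\<close> \<mu>_\<sigma>[OF assms(1)]] .
  with assms(4) \<open>\<sigma> x = \<sigma> y\<close> have "\<tau>T (lca ET x y) = \<tau>T x" by (simp add: S.lca_self)
  moreover have "(lca ET x y, x) \<in> ET\<^sup>+"
    by (rule T.is_lca_leaves_trancl[of "{x, y}" x y])
      (simp_all add: assms(1-3) T.is_lca_lca \<open>x \<in> VT\<close> \<open>y \<in> VT\<close>)
  then have "\<tau>T x < \<tau>T (lca ET x y)" by (rule T.time_map_less[OF time_map_T])
  ultimately show False by simp
qed

lemma EDT_edge_iff_sQO_edge:
  assumes generic: "generic VT ET zT VS ES zS \<mu> \<tau>T \<tau>S"
    and xy: "x \<in> leaves VT ET zT" "y \<in> leaves VT ET zT" "x \<noteq> y"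
  shows "\<tau>T (lca ET x y) = \<tau>S (lca ES (\<sigma> x) (\<sigma> y)) \<longleftrightarrow> \<mu> (lca ET x y) = Vx (lca ES (\<sigma> x) (\<sigma> y))"
proof
  have v: "lca ET x y \<in> inner VT ET zT" using T.lca_leaves_inner xy .
  assume time: "\<tau>T (lca ET x y) = \<tau>S (lca ES (\<sigma> x) (\<sigma> y))"
  then have "lca ES (\<sigma> x) (\<sigma> y) \<in> inner VS ES zS"
    using S.lca_leaves_inner \<sigma>_leaf EDT_edge_species_distinct xy by blast
  with v time generic show "\<mu> (lca ET x y) = Vx (lca ES (\<sigma> x) (\<sigma> y))"
    unfolding generic_def by blast
next
  assume "\<mu> (lca ET x y) = Vx (lca ES (\<sigma> x) (\<sigma> y))"
  moreover have "lca ET x y \<in> VT"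
    using T.lca_leaves_inner xy unfolding inner_def by blast
  ultimately show "\<tau>T (lca ET x y) = \<tau>S (lca ES (\<sigma> x) (\<sigma> y))"
    using time_at_vertex by simp
qed

lemma EDT_edge_wQO_edge:
  assumes "generic VT ET zT VS ES zS \<mu> \<tau>T \<tau>S"
    and "x \<in> leaves VT ET zT" "y \<in> leaves VT ET zT" "x \<noteq> y"
    and "\<tau>T (lca ET x y) = \<tau>S (lca ES (\<sigma> x) (\<sigma> y))"
  shows "\<mu> (lca ET x y) \<in> Vx ` inner VS ES zS"
proof -
  have "lca ES (\<sigma> x) (\<sigma> y) \<in> inner VS ES zS"
    using S.lca_leaves_inner \<sigma>_leaf EDT_edge_species_distinct assms(2-5) by blast
  with EDT_edge_iff_sQO_edge assms show ?thesis by blast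
qed

lemma time_less_if_\<mu>_below:
  assumes "x \<in> VT" "y \<in> VT" "preceq_ve ES (\<mu> x) (\<mu> y)" "\<mu> x \<noteq> \<mu> y"
  shows "\<tau>T x < \<tau>T y"
proof (cases "\<mu> x")
  case (Vx a)
  note x_at = time_at_vertex[OF assms(1) Vx]
  show ?thesis
  proof (cases "\<mu> y")
    case (Vx b)
    with \<open>\<mu> x = Vx a\<close> assms(3,4) have "(b, a) \<in> ES\<^sup>+" by (auto simp: preceq_def dest: rtranclD)
    then have "\<tau>S a < \<tau>S b" by (rule S.time_map_less[OF time_map_S])
    then show ?thesis using x_at time_at_vertex[OF assms(2) Vx] by simp
  next
    case (Ed u w)
    with \<open>\<mu> x = Vx a\<close> assms(3) have "(w, a) \<in> ES\<^sup>*" by (simp add: preceq_def)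
    then have "\<tau>S a \<le> \<tau>S w" by (rule S.time_map_le[OF time_map_S])
    then show ?thesis using x_at time_on_edge[OF assms(2) Ed] by linarith
  qed
next
  case (Ed u w)
  note x_on = time_on_edge[OF assms(1) Ed]
  show ?thesis
  proof (cases "\<mu> y")
    case (Vx a)
    with \<open>\<mu> x = Ed u w\<close> assms(3) have "(a, u) \<in> ES\<^sup>*" by (simp add: preceq_def)
    then have "\<tau>S u \<le> \<tau>S a" by (rule S.time_map_le[OF time_map_S])
    then show ?thesis using x_on time_at_vertex[OF assms(2) Vx] by linarith
  next
    case (Ed u' w')
    with \<open>\<mu> x = Ed u w\<close> assms(3) have "(w', w) \<in> ES\<^sup>*" by (simp add: preceq_def)
    have "(u, w) \<in> ES" using \<mu>_elems[OF assms(1)] \<open>\<mu> x = Ed u w\<close> unfolding elems_def by auto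
    have "(u', w') \<in> ES" using \<mu>_elems[OF assms(2)] Ed unfolding elems_def by auto
    have "w' \<noteq> w"
    proof
      assume "w' = w"
      with \<open>(u, w) \<in> ES\<close> \<open>(u', w') \<in> ES\<close> have "u' = u" using S.parent_unique by blast
      with \<open>w' = w\<close> \<open>\<mu> x = Ed u w\<close> Ed assms(4) show False by simp
    qed
    with \<open>(w', w) \<in> ES\<^sup>*\<close> \<open>(u, w) \<in> ES\<close> have "(w', u) \<in> ES\<^sup>*"
      using S.ancestor_of_parent by blast
    then have "\<tau>S u \<le> \<tau>S w'" by (rule S.time_map_le[OF time_map_S])
    then show ?thesis using x_on time_on_edge[OF assms(2) Ed] by linarith
  qed
qed

lemma \<mu>_mono_edge:
  assumes "(p, q) \<in> ET" "\<not> HGT_edge ET ES \<mu> p q"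
  shows "preceq_ve ES (\<mu> q) (\<mu> p)"
proof -
  have "p \<in> VT" "q \<in> VT" using assms(1) T.edges_in_V by blast+
  moreover have "\<tau>T q < \<tau>T p" using assms(1) T.time_map_less[OF time_map_T] by blast
  moreover have "preceq_ve ES (\<mu> p) (\<mu> q) \<or> preceq_ve ES (\<mu> q) (\<mu> p)"
    using assms unfolding HGT_edge_def comparable_ve_def by blast
  ultimately show ?thesis
    using time_less_if_\<mu>_below[of p q] preceq_ve_refl by (metis less_asym)
qed

lemma \<mu>_mono:
  assumes no_HGT: "\<nexists>u v. HGT_edge ET ES \<mu> u v" and "(w, u) \<in> ET\<^sup>*"
  shows "preceq_ve ES (\<mu> u) (\<mu> w)"
  using assms(2)
proof (induction rule: rtrancl_induct)
  case base
  show ?case by (rule preceq_ve_refl)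
next
  case (step y u)
  then have "y \<in> VT" "u \<in> VT" using T.edges_in_V by blast+
  moreover have "preceq_ve ES (\<mu> u) (\<mu> y)" using \<mu>_mono_edge step.hyps(2) no_HGT by blast
  ultimately show ?case using S.preceq_ve_trans \<mu>_elems step.IH by blast
qed

lemma child_toward_species_eq_if_no_HGT:
  assumes no_HGT: "\<nexists>u v. HGT_edge ET ES \<mu> u v"
    and vc: "(v, c) \<in> ET" and U: "\<mu> v = Vx U"
    and x: "x \<in> leaves VT ET zT" "(c, x) \<in> ET\<^sup>*" and y: "y \<in> leaves VT ET zT" "(c, y) \<in> ET\<^sup>*"
  shows "child_toward ES U (\<sigma> x) = child_toward ES U (\<sigma> y)"
proof -
  have "v \<in> VT" "c \<in> VT" using vc T.edges_in_V by blast+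
  have c_below: "preceq_ve ES (\<mu> c) (Vx U)" using \<mu>_mono[OF no_HGT r_into_rtrancl[OF vc]] U by simp
  have "\<mu> c \<noteq> Vx U"
  proof
    assume "\<mu> c = Vx U"
    then have "\<tau>T c = \<tau>T v" using time_at_vertex \<open>c \<in> VT\<close> \<open>v \<in> VT\<close> U by metis
    moreover have "\<tau>T c < \<tau>T v" using vc T.time_map_less[OF time_map_T] by blast
    ultimately show False by simp
  qed
  \<comment> \<open>all leaves below c are mapped below \<mu> c, which lies strictly below U\<close>
  have leaf_below: "preceq_ve ES (Vx (\<sigma> l)) (\<mu> c)" if "l \<in> leaves VT ET zT" "(c, l) \<in> ET\<^sup>*" for l
    using \<mu>_mono[OF no_HGT that(2)] \<mu>_\<sigma>[OF that(1)] by simp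
  obtain s where s: "(U, s) \<in> ES\<^sup>+"
    and below_s: "\<And>l. l \<in> leaves VT ET zT \<Longrightarrow> (c, l) \<in> ET\<^sup>* \<Longrightarrow> (s, \<sigma> l) \<in> ES\<^sup>*"
  proof (cases "\<mu> c")
    case (Vx W)
    with c_below \<open>\<mu> c \<noteq> Vx U\<close> have "(U, W) \<in> ES\<^sup>+" by (auto simp: preceq_def dest: rtranclD)
    with that leaf_below Vx show thesis by (simp add: preceq_def)
  next
    case (Ed p q)
    have "(p, q) \<in> ES" using \<mu>_elems[OF \<open>c \<in> VT\<close>] Ed unfolding elems_def by auto
    with c_below Ed have "(U, q) \<in> ES\<^sup>+" by (simp add: preceq_def rtrancl_into_trancl1)
    with that leaf_below Ed show thesis by (simp add: preceq_def)
  qed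
  have "child_toward ES U (\<sigma> x) = child_toward ES U s"
    by (rule S.child_toward_descendant[OF s below_s[OF x]])
  also have "\<dots> = child_toward ES U (\<sigma> y)"
    by (rule S.child_toward_descendant[OF s below_s[OF y], symmetric])
  finally show ?thesis .
qed

lemma sQO_edge_iff_child_toward:
  assumes x: "x \<in> leaves VT ET zT" and y: "y \<in> leaves VT ET zT" and "x \<noteq> y"
    and lca: "\<mu> (lca ET x y) = Vx U" and U: "U \<in> inner VS ES zS"
  shows "(x, y) \<in> snd (sQO VT ET zT ES \<sigma> \<mu>) \<longleftrightarrow>
    child_toward ES U (\<sigma> x) \<noteq> None \<and> child_toward ES U (\<sigma> y) \<noteq> None \<and>
    child_toward ES U (\<sigma> x) \<noteq> child_toward ES U (\<sigma> y)"
proof -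
  have leaves: "\<sigma> x \<in> leaves VS ES zS" "\<sigma> y \<in> leaves VS ES zS" using x y \<sigma>_leaf by blast+
  then have "\<sigma> x \<noteq> U" "\<sigma> y \<noteq> U" using U unfolding inner_def by auto
  have "(x, y) \<in> snd (sQO VT ET zT ES \<sigma> \<mu>) \<longleftrightarrow> lca ES (\<sigma> x) (\<sigma> y) = U"
    using x y \<open>x \<noteq> y\<close> lca by (auto simp: sQO_def)
  also have "\<dots> \<longleftrightarrow> is_lca ES {\<sigma> x, \<sigma> y} U"
    using leaves S.leaf_in_V S.lca_eq_iff by blast
  also have "\<dots> \<longleftrightarrow> child_toward ES U (\<sigma> x) \<noteq> None \<and> child_toward ES U (\<sigma> y) \<noteq> None \<and>
      child_toward ES U (\<sigma> x) \<noteq> child_toward ES U (\<sigma> y)"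
    by (rule S.is_lca_iff_child_toward) fact+
  finally show ?thesis .
qed

lemma sQO_edge_child_toward_eq:
  assumes edge: "(x, y) \<in> snd (sQO VT ET zT ES \<sigma> \<mu>)"
    and v: "(v, lca ET x y) \<in> ET\<^sup>+" "\<mu> v = Vx U"
  shows "child_toward ES U (\<sigma> x) = child_toward ES U (\<sigma> y)"
proof -
  have leaves: "\<sigma> x \<in> leaves VS ES zS" "\<sigma> y \<in> leaves VS ES zS"
    and \<mu>_lca: "\<mu> (lca ET x y) = Vx (lca ES (\<sigma> x) (\<sigma> y))"
    using edge \<sigma>_leaf by (auto simp: sQO_def)
  have "v \<in> VT" "lca ET x y \<in> VT" using v(1) T.trancl_in_V by blast+
  have "\<tau>S (lca ES (\<sigma> x) (\<sigma> y)) = \<tau>T (lca ET x y)"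
    by (rule time_at_vertex[OF \<open>lca ET x y \<in> VT\<close> \<mu>_lca])
  also have "\<dots> < \<tau>T v" by (rule T.time_map_less[OF time_map_T v(1)])
  also have "\<dots> = \<tau>S U" by (rule time_at_vertex[OF \<open>v \<in> VT\<close> v(2), symmetric])
  finally have "(lca ES (\<sigma> x) (\<sigma> y), U) \<notin> ES\<^sup>*"
    using S.time_map_le[OF time_map_S] by (meson not_le)
  moreover have "is_lca ES {\<sigma> x, \<sigma> y} (lca ES (\<sigma> x) (\<sigma> y))"
    using leaves S.leaf_in_V S.is_lca_lca by blast
  ultimately show ?thesis using S.child_toward_eq_if_lca_not_above by blast
qed

lemma sQO_cross_edge_iff:
  assumes A: "A \<subseteq> leaves VT ET zT" "a \<in> A" "b \<in> A" "a \<noteq> b" and v: "is_lca ET A v" "\<mu> v = Vx U"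
    and xy: "x \<in> A" "y \<in> A" "child_toward ET v x \<noteq> child_toward ET v y"
  shows "(x, y) \<in> snd (sQO VT ET zT ES \<sigma> \<mu>) \<longleftrightarrow>
    child_toward ES U (\<sigma> x) \<noteq> None \<and> child_toward ES U (\<sigma> y) \<noteq> None \<and>
    child_toward ES U (\<sigma> x) \<noteq> child_toward ES U (\<sigma> y)"
proof (rule sQO_edge_iff_child_toward)
  show "x \<in> leaves VT ET zT" "y \<in> leaves VT ET zT" using A(1) xy(1,2) by blast+
  show "x \<noteq> y" using xy(3) by blast
  show "\<mu> (lca ET x y) = Vx U"
    using T.lca_eq_iff_child_toward_ne[OF A v(1) xy(1,2)] xy(3) v(2) by simp
  show "U \<in> inner VS ES zS" using \<mu>_inner[OF T.is_lca_inner[OF A v(1)] v(2)] .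
qed

lemma sQO_not_induced_P4_if_not_vertex:
  assumes A: "{a, b, c, d} \<subseteq> leaves VT ET zT" "a \<noteq> b"
    and v: "is_lca ET {a, b, c, d} v" "\<mu> v \<notin> range Vx"
  shows "\<not> induced_P4 (snd (sQO VT ET zT ES \<sigma> \<mu>)) a b c d"
proof (rule not_induced_P4_if_classes_constant[where \<beta> = "child_toward ET v" and \<kappa> = "\<lambda>_. None"])
  show "\<not> (child_toward ET v a = child_toward ET v b \<and> child_toward ET v a = child_toward ET v c \<and>
      child_toward ET v a = child_toward ET v d)"
    using T.child_toward_not_constant[OF A(1) _ _ A(2) v(1)] by auto
  show "(x, y) \<in> snd (sQO VT ET zT ES \<sigma> \<mu>) \<longleftrightarrow> None \<noteq> None \<and> None \<noteq> None \<and> None \<noteq> None"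
    if "x \<in> {a, b, c, d}" "y \<in> {a, b, c, d}" "child_toward ET v x \<noteq> child_toward ET v y" for x y
    using T.lca_eq_iff_child_toward_ne[OF A(1) _ _ A(2) v(1) that(1,2)] that(3) v(2)
    by (auto simp: sQO_def)
qed simp

lemma sQO_not_induced_P4_if_no_HGT:
  assumes no_HGT: "\<nexists>u v. HGT_edge ET ES \<mu> u v"
    and A: "{a, b, c, d} \<subseteq> leaves VT ET zT" "a \<noteq> b"
    and v: "is_lca ET {a, b, c, d} v" "\<mu> v = Vx U"
  shows "\<not> induced_P4 (snd (sQO VT ET zT ES \<sigma> \<mu>)) a b c d"
proof (rule not_induced_P4_if_classes_constant
    [where \<beta> = "child_toward ET v" and \<kappa> = "\<lambda>x. child_toward ES U (\<sigma> x)"])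
  show "\<not> (child_toward ET v a = child_toward ET v b \<and> child_toward ET v a = child_toward ET v c \<and>
      child_toward ET v a = child_toward ET v d)"
    using T.child_toward_not_constant[OF A(1) _ _ A(2) v(1)] by auto
  show "(x, y) \<in> snd (sQO VT ET zT ES \<sigma> \<mu>) \<longleftrightarrow>
      child_toward ES U (\<sigma> x) \<noteq> None \<and> child_toward ES U (\<sigma> y) \<noteq> None \<and>
      child_toward ES U (\<sigma> x) \<noteq> child_toward ES U (\<sigma> y)"
    if "x \<in> {a, b, c, d}" "y \<in> {a, b, c, d}" "child_toward ET v x \<noteq> child_toward ET v y" for x y
    using sQO_cross_edge_iff[OF A(1) _ _ A(2) v that] by simp
  show "child_toward ES U (\<sigma> x) = child_toward ES U (\<sigma> y)"
    if xy: "x \<in> {a, b, c, d}" "y \<in> {a, b, c, d}" and eq: "child_toward ET v x = child_toward ET v y"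
    for x y
  proof -
    obtain w where w: "child_toward ET v x = Some w"
      using T.child_toward_defined[OF A(1) _ _ A(2) v(1) xy(1)] by auto
    moreover from w eq have "child_toward ET v y = Some w" by simp
    ultimately have "(v, w) \<in> ET" "(w, x) \<in> ET\<^sup>*" "(w, y) \<in> ET\<^sup>*"
      using T.child_toward_SomeD by blast+
    with xy A(1) show ?thesis using child_toward_species_eq_if_no_HGT[OF no_HGT _ v(2)] by blast
  qed
qed

lemma sQO_not_induced_P4_if_binary:
  assumes binary: "binary_tree VS ES zS" "binary_tree VT ET zT"
    and A: "{a, b, c, d} \<subseteq> leaves VT ET zT" "a \<noteq> b"
    and v: "is_lca ET {a, b, c, d} v" "\<mu> v = Vx U"
  shows "\<not> induced_P4 (snd (sQO VT ET zT ES \<sigma> \<mu>)) a b c d"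
proof -
  have v_inner: "v \<in> inner VT ET zT" using T.is_lca_inner[OF A(1) _ _ A(2) v(1)] by simp
  obtain p q where pq: "children ET v = {p, q}"
    using binary(2) v_inner unfolding binary_tree_def by (meson card_2_iff)
  obtain l r where lr: "children ES U = {l, r}"
    using binary(1) \<mu>_inner[OF v_inner v(2)] unfolding binary_tree_def by (meson card_2_iff)
  show ?thesis
  proof (rule not_induced_P4_if_two_classes[where \<beta> = "child_toward ET v"
        and \<kappa> = "\<lambda>x. child_toward ES U (\<sigma> x)" and p = "Some p" and q = "Some q" and l = l and r = r])
    show "\<not> (child_toward ET v a = child_toward ET v b \<and> child_toward ET v a = child_toward ET v c \<and>
        child_toward ET v a = child_toward ET v d)"
      using T.child_toward_not_constant[OF A(1) _ _ A(2) v(1)] by auto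
    show "(x, y) \<in> snd (sQO VT ET zT ES \<sigma> \<mu>) \<longleftrightarrow>
        child_toward ES U (\<sigma> x) \<noteq> None \<and> child_toward ES U (\<sigma> y) \<noteq> None \<and>
        child_toward ES U (\<sigma> x) \<noteq> child_toward ES U (\<sigma> y)"
      if "x \<in> {a, b, c, d}" "y \<in> {a, b, c, d}" "child_toward ET v x \<noteq> child_toward ET v y" for x y
      using sQO_cross_edge_iff[OF A(1) _ _ A(2) v that] by simp
    show "child_toward ES U (\<sigma> x) = child_toward ES U (\<sigma> y)"
      if "x \<in> {a, b, c, d}" "y \<in> {a, b, c, d}" "child_toward ET v x = child_toward ET v y"
        and edge: "(x, y) \<in> snd (sQO VT ET zT ES \<sigma> \<mu>)" for x y
      using sQO_edge_child_toward_eq[OF edge T.lca_below_if_child_toward_eq[OF A(1) _ _ A(2) v(1)] v(2)]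
        that by simp
    show "child_toward ET v x = Some p \<or> child_toward ET v x = Some q" if "x \<in> {a, b, c, d}" for x
      using T.child_toward_defined[OF A(1) _ _ A(2) v(1) that] T.child_toward_in_children pq by fastforce
    show "child_toward ES U (\<sigma> x) = None \<or> child_toward ES U (\<sigma> x) = Some l \<or>
        child_toward ES U (\<sigma> x) = Some r" for x
      using S.child_toward_in_children lr by (cases "child_toward ES U (\<sigma> x)") auto
  qed
qed

lemma sQO_cograph:
  assumes "(\<nexists>u v. HGT_edge ET ES \<mu> u v) \<or> (binary_tree VS ES zS \<and> binary_tree VT ET zT)"
  shows "cograph (sQO VT ET zT ES \<sigma> \<mu>)"
proof (rule cographI)
  fix a b c d
  assume "{a, b, c, d} \<subseteq> fst (sQO VT ET zT ES \<sigma> \<mu>)" "distinct [a, b, c, d]"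
  then have A: "{a, b, c, d} \<subseteq> leaves VT ET zT" "a \<noteq> b" by (simp_all add: sQO_def)
  then have "{a, b, c, d} \<subseteq> VT" using T.leaf_in_V by blast
  then obtain v where v: "is_lca ET {a, b, c, d} v" using T.is_lca_exists by blast
  show "\<not> induced_P4 (snd (sQO VT ET zT ES \<sigma> \<mu>)) a b c d"
  proof (cases "\<mu> v \<in> range Vx")
    case True
    then obtain U where U: "\<mu> v = Vx U" by blast
    from assms show ?thesis
    proof
      assume "\<nexists>u v. HGT_edge ET ES \<mu> u v"
      from sQO_not_induced_P4_if_no_HGT[OF this A v U] show ?thesis .
    next
      assume "binary_tree VS ES zS \<and> binary_tree VT ET zT"
      with sQO_not_induced_P4_if_binary[OF _ _ A v U] show ?thesis by blast
    qed
  next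
    case False
    with A v show ?thesis by (intro sQO_not_induced_P4_if_not_vertex)
  qed
qed

end

theorem theorem8:
  fixes VT :: "'v set" and ET :: "('v \<times> 'v) set" and zT :: 'v
    and VS :: "'s set" and ES :: "('s \<times> 's) set" and zS :: 's
    and \<sigma> :: "'v \<Rightarrow> 's" and \<mu> :: "'v \<Rightarrow> 's vedge"
    and \<tau>T :: "'v \<Rightarrow> real" and \<tau>S :: "'s \<Rightarrow> real"
  assumes scen: "relaxed_scenario VT ET zT VS ES zS \<sigma> \<mu> \<tau>T \<tau>S"
    and gen: "generic VT ET zT VS ES zS \<mu> \<tau>T \<tau>S"
  shows "EDT_graph VT ET zT ES \<sigma> \<tau>T \<tau>S = sQO VT ET zT ES \<sigma> \<mu>
    \<and> subgraph (EDT_graph VT ET zT ES \<sigma> \<tau>T \<tau>S) (wQO VT ET zT VS ES zS \<mu>)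
    \<and> ((\<not> (\<exists>u v. HGT_edge ET ES \<mu> u v)) \<or> (binary_tree VS ES zS \<and> binary_tree VT ET zT)
         \<longrightarrow> cograph (sQO VT ET zT ES \<sigma> \<mu>))"
proof -
  interpret scenario VT ET zT VS ES zS \<sigma> \<mu> \<tau>T \<tau>S
    using scen by (rule scenario.intro)
  have "EDT_graph VT ET zT ES \<sigma> \<tau>T \<tau>S = sQO VT ET zT ES \<sigma> \<mu>"
    unfolding EDT_graph_def sQO_def using EDT_edge_iff_sQO_edge[OF gen] by auto
  moreover have "subgraph (EDT_graph VT ET zT ES \<sigma> \<tau>T \<tau>S) (wQO VT ET zT VS ES zS \<mu>)"
    unfolding subgraph_def EDT_graph_def wQO_def using EDT_edge_wQO_edge[OF gen] by auto
  ultimately show ?thesis using sQO_cograph by blast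
qed

end
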